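(* Let $n\in\mathbb N$ and let $X_1,\dots,X_n$ be independent random variables with ${\sf E}X_i=0$ and $0<{\sf E}X_i^2<\infty$. Then for every $\varepsilon\in(0,\infty)$, $$L_n(1)+M_n(1)\le L_n(\varepsilon)+M_n(\varepsilon).$$
   Context: $B_n^2=\sum_{i=1}^n{\sf E}X_i^2$. For $\varepsilon>0$, $L_n(\varepsilon)=B_n^{-2}\sum_{i=1}^n{\sf E}X_i^2\mathbb I(|X_i|\ge\varepsilon B_n)$ and $M_n(\varepsilon)=B_n^{-3}\sum_{i=1}^n{\sf E}|X_i|^3\mathbb I(|X_i|<\varepsilon B_n)$, where $\mathbb I(A)$ is the indicator of the event $A$. *)

theory Defs
  imports "HOL-Probability.Probability"
begin

definition Bsq :: "'a measure \<Rightarrow> (nat \<Rightarrow> 'a \<Rightarrow> real) \<Rightarrow> nat \<Rightarrow> real" where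
  "Bsq M X n = (\<Sum>i\<in>{1..n}. prob_space.expectation M (\<lambda>\<omega>. (X i \<omega>)^2))"

definition Lfrac :: "'a measure \<Rightarrow> (nat \<Rightarrow> 'a \<Rightarrow> real) \<Rightarrow> nat \<Rightarrow> real \<Rightarrow> real" where
  "Lfrac M X n \<epsilon> = (\<Sum>i\<in>{1..n}. prob_space.expectation M
      (\<lambda>\<omega>. (X i \<omega>)^2 * indicator {\<omega>. \<bar>X i \<omega>\<bar> \<ge> \<epsilon> * sqrt (Bsq M X n)} \<omega>)) / Bsq M X n"

definition Mfrac :: "'a measure \<Rightarrow> (nat \<Rightarrow> 'a \<Rightarrow> real) \<Rightarrow> nat \<Rightarrow> real \<Rightarrow> real" where
  "Mfrac M X n \<epsilon> = (\<Sum>i\<in>{1..n}. prob_space.expectation M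
      (\<lambda>\<omega>. \<bar>X i \<omega>\<bar>^3 * indicator {\<omega>. \<bar>X i \<omega>\<bar> < \<epsilon> * sqrt (Bsq M X n)} \<omega>)) / (sqrt (Bsq M X n))^3"

end

theory Submission
  imports Defs
begin

text \<open>With \<open>u = |X_i| / B_n\<close>, the i-th summand of \<open>L_n(\<epsilon>) + M_n(\<epsilon>)\<close> is the expectation of
  \<open>u\<^sup>2\<close> on \<open>{u \<ge> \<epsilon>}\<close> and \<open>u\<^sup>3\<close> on \<open>{u < \<epsilon>}\<close>. For \<open>\<epsilon> = 1\<close> this integrand is exactly
  \<open>min u\<^sup>2 u\<^sup>3\<close>, which is pointwise below any choice between \<open>u\<^sup>2\<close> and \<open>u\<^sup>3\<close>; integrating and
  summing gives the claim.\<close>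

lemma square_cube_split_at_one_le:
  fixes u e :: real
  assumes "0 \<le> u"
  shows "u^2 * of_bool (1 \<le> u) + u^3 * of_bool (u < 1)
       \<le> u^2 * of_bool (e \<le> u) + u^3 * of_bool (u < e)"
proof -
  have "1 \<le> u \<Longrightarrow> u^2 \<le> u^3" by (rule power_increasing) auto
  moreover have "u < 1 \<Longrightarrow> u^3 \<le> u^2" using assms by (simp add: power_decreasing)
  ultimately show ?thesis by auto
qed

lemma integrable_square_indicator:
  fixes X :: "'a \<Rightarrow> real"
  assumes "X \<in> borel_measurable M" "integrable M (\<lambda>\<omega>. (X \<omega>)^2)"
  shows "integrable M (\<lambda>\<omega>. (X \<omega>)^2 * indicator {\<omega>. c \<le> \<bar>X \<omega>\<bar>} \<omega>)"
  using assms(1)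
  by (intro Bochner_Integration.integrable_bound[OF assms(2)])
     (auto simp: indicator_def)

lemma integrable_truncated_abs_cube:
  fixes X :: "'a \<Rightarrow> real"
  assumes "X \<in> borel_measurable M" "integrable M (\<lambda>\<omega>. (X \<omega>)^2)"
  shows "integrable M (\<lambda>\<omega>. \<bar>X \<omega>\<bar>^3 * indicator {\<omega>. \<bar>X \<omega>\<bar> < c} \<omega>)"
proof (rule Bochner_Integration.integrable_bound[OF integrable_mult_left[OF assms(2), of "\<bar>c\<bar>"]])
  show "(\<lambda>\<omega>. \<bar>X \<omega>\<bar>^3 * indicator {\<omega>. \<bar>X \<omega>\<bar> < c} \<omega>) \<in> borel_measurable M"
    using assms(1) by (auto simp: indicator_def)
  have "\<bar>x\<bar>^3 * indicator {x. \<bar>x\<bar> < c} x \<le> \<bar>c\<bar> * x^2" for x :: real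
  proof (cases "\<bar>x\<bar> < c")
    case True
    then have "\<bar>x\<bar> * x^2 \<le> \<bar>c\<bar> * x^2" by (intro mult_right_mono) auto
    then show ?thesis using True by (simp add: power3_eq_cube power2_eq_square)
  qed simp
  then show "AE \<omega> in M. norm (\<bar>X \<omega>\<bar>^3 * indicator {\<omega>. \<bar>X \<omega>\<bar> < c} \<omega>)
                        \<le> norm ((X \<omega>)^2 * \<bar>c\<bar>)"
    by (auto simp: indicator_def mult.commute)
qed

lemma truncated_moments_threshold_mono:
  fixes X :: "'a \<Rightarrow> real" and B e :: real
  assumes "X \<in> borel_measurable M" "integrable M (\<lambda>\<omega>. (X \<omega>)^2)" "0 \<le> B"
  shows "(\<integral>\<omega>. (X \<omega>)^2 * indicator {\<omega>. B \<le> \<bar>X \<omega>\<bar>} \<omega> \<partial>M) / B^2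
         + (\<integral>\<omega>. \<bar>X \<omega>\<bar>^3 * indicator {\<omega>. \<bar>X \<omega>\<bar> < B} \<omega> \<partial>M) / B^3
       \<le> (\<integral>\<omega>. (X \<omega>)^2 * indicator {\<omega>. e * B \<le> \<bar>X \<omega>\<bar>} \<omega> \<partial>M) / B^2
         + (\<integral>\<omega>. \<bar>X \<omega>\<bar>^3 * indicator {\<omega>. \<bar>X \<omega>\<bar> < e * B} \<omega> \<partial>M) / B^3"
proof (cases "B = 0")
  case False
  with assms(3) have B_pos: "B > 0" by simp
  define g where "g c \<omega> = (\<bar>X \<omega>\<bar> / B)^2 * of_bool (c \<le> \<bar>X \<omega>\<bar> / B)
                         + (\<bar>X \<omega>\<bar> / B)^3 * of_bool (\<bar>X \<omega>\<bar> / B < c)" for c \<omega>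
  have g_eq: "g c = (\<lambda>\<omega>. (X \<omega>)^2 * indicator {\<omega>. c * B \<le> \<bar>X \<omega>\<bar>} \<omega> / B^2
                        + \<bar>X \<omega>\<bar>^3 * indicator {\<omega>. \<bar>X \<omega>\<bar> < c * B} \<omega> / B^3)" for c
    using B_pos by (auto simp: g_def fun_eq_iff indicator_def power_divide le_divide_eq divide_less_eq)
  have g_integrable: "integrable M (g c)" for c
    unfolding g_eq
    using integrable_square_indicator[OF assms(1,2)] integrable_truncated_abs_cube[OF assms(1,2)]
    by simp
  have integral_g: "integral\<^sup>L M (g c)
      = (\<integral>\<omega>. (X \<omega>)^2 * indicator {\<omega>. c * B \<le> \<bar>X \<omega>\<bar>} \<omega> \<partial>M) / B^2
        + (\<integral>\<omega>. \<bar>X \<omega>\<bar>^3 * indicator {\<omega>. \<bar>X \<omega>\<bar> < c * B} \<omega> \<partial>M) / B^3" for c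
    unfolding g_eq
    using integrable_square_indicator[OF assms(1,2)] integrable_truncated_abs_cube[OF assms(1,2)]
    by simp
  have "integral\<^sup>L M (g 1) \<le> integral\<^sup>L M (g e)"
    unfolding g_def
    using B_pos
    by (intro integral_mono g_integrable[unfolded g_def] square_cube_split_at_one_le)
       (simp_all add: divide_nonneg_pos)
  then show ?thesis using integral_g[of 1] integral_g[of e] by simp
qed simp

theorem lemma1:
  fixes M :: "'a measure" and X :: "nat \<Rightarrow> 'a \<Rightarrow> real" and n :: nat and \<epsilon> :: real
  assumes "prob_space M"
    and "prob_space.indep_vars M (\<lambda>_. borel) X {1..n}"
    and "\<And>i. i \<in> {1..n} \<Longrightarrow> integrable M (X i)"
    and "\<And>i. i \<in> {1..n} \<Longrightarrow> prob_space.expectation M (X i) = 0"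
    and "\<And>i. i \<in> {1..n} \<Longrightarrow> integrable M (\<lambda>\<omega>. (X i \<omega>)^2)"
    and "\<And>i. i \<in> {1..n} \<Longrightarrow> 0 < prob_space.expectation M (\<lambda>\<omega>. (X i \<omega>)^2)"
    and "0 < \<epsilon>"
  shows "Lfrac M X n 1 + Mfrac M X n 1 \<le> Lfrac M X n \<epsilon> + Mfrac M X n \<epsilon>"
proof -
  define B where "B = sqrt (Bsq M X n)"
  have "0 \<le> Bsq M X n"
    unfolding Bsq_def by (intro sum_nonneg integral_nonneg) auto
  then have Bsq_eq: "Bsq M X n = B^2" and B_nonneg: "0 \<le> B"
    by (simp_all add: B_def)
  have "(\<Sum>i\<in>{1..n}. (\<integral>\<omega>. (X i \<omega>)^2 * indicator {\<omega>. B \<le> \<bar>X i \<omega>\<bar>} \<omega> \<partial>M) / B^2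
                  + (\<integral>\<omega>. \<bar>X i \<omega>\<bar>^3 * indicator {\<omega>. \<bar>X i \<omega>\<bar> < B} \<omega> \<partial>M) / B^3)
      \<le> (\<Sum>i\<in>{1..n}. (\<integral>\<omega>. (X i \<omega>)^2 * indicator {\<omega>. \<epsilon> * B \<le> \<bar>X i \<omega>\<bar>} \<omega> \<partial>M) / B^2
                  + (\<integral>\<omega>. \<bar>X i \<omega>\<bar>^3 * indicator {\<omega>. \<bar>X i \<omega>\<bar> < \<epsilon> * B} \<omega> \<partial>M) / B^3)"
    using assms(3,5) B_nonneg
    by (intro sum_mono truncated_moments_threshold_mono) auto
  then show ?thesis
    unfolding Lfrac_def Mfrac_def B_def[symmetric] Bsq_eq
    by (simp add: sum.distrib sum_divide_distrib B_nonneg)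
qed

end
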